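(* Let $\Sigma_{\tau_d}=(\mathbb{R}^n,P,\mathcal P,F)$ be a switched system with $\mathcal P=\mathcal S_{\tau_d}(\mathbb{R}^+_0,P)$, let $\tau_s,\eta,\varepsilon>0$ with $\tau_d=N\tau_s$ for a positive integer $N$. Assume that for every $p\in P$ there is a $\delta$-GAS Lyapunov function $V_p$ for $\Sigma_p$, that there exists $\mu\ge1$ with $V_p(x,y)\le\mu V_{p'}(x,y)$ for all $x,y\in\mathbb{R}^n$ and $p,p'\in P$, and that for every $p$ there is a $\mathcal K_\infty$ function $\gamma_p$ with $|V_p(x,y)-V_p(x,z)|\le\gamma_p(\|y-z\|)$ for all $x,y,z\in\mathbb{R}^n$; let $\gamma=\max_p\gamma_p$. If $\tau_d>\frac{\log\mu}{\kappa}$ and $$\eta\le\min\Big\{\gamma^{-1}\Big(\frac{\frac1\mu-e^{-\kappa\tau_d}}{1-e^{-\kappa\tau_d}}(1-e^{-\kappa\tau_s})\underline\alpha(\varepsilon)\Big),\ \overline\alpha^{-1}\big(\underline\alpha(\varepsilon)\big)\Big\},$$ then $T_{\tau_s}(\Sigma_{\tau_d})\sim_\varepsilon T_{\tau_s,\eta}(\Sigma_{\tau_d})$.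
   Context: A switched system is $\Sigma=(\mathbb{R}^n,P,\mathcal P,F)$ where $P=\{1,\dots,m\}$; $\mathcal S(\mathbb{R}^+_0,P)$ is the set of piecewise constant, right-continuous functions $\mathbb{R}^+_0\to P$ with finitely many discontinuities (switching times) on every bounded interval; $\mathcal S_{\tau_d}(\mathbb{R}^+_0,P)$ is the subset of signals whose switching times $t_1<t_2<\cdots$ satisfy $t_1\ge\tau_d$ and $t_i-t_{i-1}\ge\tau_d$ for $i\ge2$. $F=\{f_1,\dots,f_m\}$ with each $f_p$ locally Lipschitz and all solutions of $\dot x=f_p(x)$ defined for all $t\ge0$. Subsystem $\Sigma_p$: $\dot x=f_p(x)$; $\mathbf x(t,x,p)$ is its solution at time $t$ from $x$. A smooth $V_p:\mathbb{R}^n\times\mathbb{R}^n\to\mathbb{R}^+_0$ is a $\delta$-GAS Lyapunov function for $\Sigma_p$ if there exist $\mathcal K_\infty$ functions $\underline\alpha_p,\overline\alpha_p$ and $\kappa_p>0$ with $\underline\alpha_p(\|x-y\|)\le V_p(x,y)\le\overline\alpha_p(\|x-y\|)$ and $\frac{\partial V_p}{\partial x}(x,y)f_p(x)+\frac{\partial V_p}{\partial y}(x,y)f_p(y)\le-\kappa_p V_p(x,y)$ for all $x,y$ ($\mathcal K_\infty$: continuous, strictly increasing, unbounded, zero at zero). Set $\underline\alpha=\min_p\underline\alpha_p$, $\overline\alpha=\max_p\overline\alpha_p$, $\kappa=\min_p\kappa_p$. A transition system is $T=(Q,L,\to,O,H,I)$: states, labels, transition relation $\to\subseteq Q\times L\times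 Q$ (written $q\xrightarrow{l}q'$), outputs, output map $H:Q\to O$, initial states $I\subseteq Q$; metric if $O$ has a metric $d$. For metric $T_1,T_2$ with common $L,O$ and $\varepsilon\ge0$, $R\subseteq Q_1\times Q_2$ is an $\varepsilon$-approximate bisimulation relation if for all $(q_1,q_2)\in R$: $d(H_1(q_1),H_2(q_2))\le\varepsilon$; every $q_1\xrightarrow{l}_1q_1'$ is matched by some $q_2\xrightarrow{l}_2q_2'$ with $(q_1',q_2')\in R$; and symmetrically. $T_1\sim_\varepsilon T_2$ if such $R$ exists with every initial state of $T_1$ related to some initial state of $T_2$ and vice versa. $T_{\tau_s}(\Sigma_{\tau_d})$: states $\mathbb{R}^n\times P\times\{0,\dots,N-1\}$; labels $P$; $(x,p,i)\xrightarrow{l}(x',p',i')$ iff $l=p$, $x'=\mathbf x(\tau_s,x,p)$ and one of: (a) $i<N-1$, $p'=p$, $i'=i+1$; (b) $i=N-1$, $p'=p$, $i'=N-1$; (c) $i=N-1$, $p'\neq p$, $i'=0$. Outputs $\mathbb{R}^n$, $H((x,p,i))=x$, initial states $\mathbb{R}^n\times P\times\{0\}$. Lattice $[\mathbb{R}^n]_\eta=\{q\in\mathbb{R}^n: q_i=k_i\frac{2\eta}{\sqrt n},\ k_i\in\mathbb Z\}$. $T_{\tau_s,\eta}(\Sigma_{\tau_d})$: states $[\mathbb{R}^n]_\eta\times P\times\{0,\dots,N-1\}$; labels $P$; $(q,p,i)\xrightarrow{l}(q',p',i')$ iff $l=p$, $\|\mathbf x(\tau_s,q,p)-q'\|\le\eta$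 and one of (a),(b),(c) above holds; outputs $\mathbb{R}^n$, $H((q,p,i))=q$; initial states $[\mathbb{R}^n]_\eta\times P\times\{0\}$. Both use the Euclidean metric on $\mathbb{R}^n$. *)

theory Defs
  imports "HOL-Analysis.Analysis"
begin

definition Kinf :: "(real \<Rightarrow> real) \<Rightarrow> bool" where
  "Kinf a \<longleftrightarrow> continuous_on {0..} a \<and> strict_mono_on {0..} a \<and> a 0 = 0 \<and>
     filterlim a at_top at_top"

definition Kinf_inv :: "(real \<Rightarrow> real) \<Rightarrow> real \<Rightarrow> real" where
  "Kinf_inv a r = (THE s. 0 \<le> s \<and> a s = r)"

fun iter_dderiv :: "'a::real_normed_vector list \<Rightarrow> ('a \<Rightarrow> real) \<Rightarrow> 'a \<Rightarrow> real" where
  "iter_dderiv [] g = g"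
| "iter_dderiv (v # vs) g = (\<lambda>x. frechet_derivative (iter_dderiv vs g) (at x) v)"

text \<open>g is smooth iff every iterated directional derivative exists and is
  differentiable everywhere (hence all derivatives of all orders exist and are continuous).\<close>
definition smooth :: "('a::real_normed_vector \<Rightarrow> real) \<Rightarrow> bool" where
  "smooth g \<longleftrightarrow> (\<forall>vs x. iter_dderiv vs g differentiable (at x))"

definition is_flow :: "('a::real_normed_vector \<Rightarrow> 'a) \<Rightarrow> (real \<Rightarrow> 'a \<Rightarrow> 'a) \<Rightarrow> bool" where
  "is_flow f phi \<longleftrightarrow> (\<forall>x. phi 0 x = x \<and>
     (\<forall>t\<ge>0. ((\<lambda>s. phi s x) has_vector_derivative f (phi t x)) (at t within {0..})))"

definition deltaGAS_Lyapunov ::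
  "('a::euclidean_space \<Rightarrow> 'a) \<Rightarrow> ('a \<Rightarrow> 'a \<Rightarrow> real) \<Rightarrow> (real \<Rightarrow> real) \<Rightarrow> (real \<Rightarrow> real) \<Rightarrow> real \<Rightarrow> bool" where
  "deltaGAS_Lyapunov f V al au k \<longleftrightarrow>
     smooth (\<lambda>(x, y). V x y) \<and> (\<forall>x y. 0 \<le> V x y) \<and>
     Kinf al \<and> Kinf au \<and> k > 0 \<and>
     (\<forall>x y. al (norm (x - y)) \<le> V x y \<and> V x y \<le> au (norm (x - y))) \<and>
     (\<forall>x y. frechet_derivative (\<lambda>(x, y). V x y) (at (x, y)) (f x, f y) \<le> - k * V x y)"

record ('q, 'l, 'o) tsys =
  states :: "'q set"
  labels :: "'l set"
  trans :: "('q \<times> 'l \<times> 'q) set"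
  outs :: "'o set"
  outmap :: "'q \<Rightarrow> 'o"
  inits :: "'q set"

definition approx_bisim_rel ::
  "('q1, 'l, 'o::metric_space) tsys \<Rightarrow> ('q2, 'l, 'o) tsys \<Rightarrow> real \<Rightarrow> ('q1 \<times> 'q2) set \<Rightarrow> bool" where
  "approx_bisim_rel T1 T2 e R \<longleftrightarrow> R \<subseteq> states T1 \<times> states T2 \<and>
     (\<forall>(q1, q2) \<in> R.
        dist (outmap T1 q1) (outmap T2 q2) \<le> e \<and>
        (\<forall>l q1'. (q1, l, q1') \<in> trans T1 \<longrightarrow> (\<exists>q2'. (q2, l, q2') \<in> trans T2 \<and> (q1', q2') \<in> R)) \<and>
        (\<forall>l q2'. (q2, l, q2') \<in> trans T2 \<longrightarrow> (\<exists>q1'. (q1, l, q1') \<in> trans T1 \<and> (q1', q2') \<in> R)))"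

definition approx_bisimilar ::
  "('q1, 'l, 'o::metric_space) tsys \<Rightarrow> real \<Rightarrow> ('q2, 'l, 'o) tsys \<Rightarrow> bool" where
  "approx_bisimilar T1 e T2 \<longleftrightarrow> (\<exists>R. approx_bisim_rel T1 T2 e R \<and>
      (\<forall>q1 \<in> inits T1. \<exists>q2 \<in> inits T2. (q1, q2) \<in> R) \<and>
      (\<forall>q2 \<in> inits T2. \<exists>q1 \<in> inits T1. (q1, q2) \<in> R))"

text \<open>Modes \<open>P = {1..m}\<close>; \<open>phi p\<close> is the flow of subsystem p; states (x, p, i).\<close>
definition mode_step :: "nat set \<Rightarrow> nat \<Rightarrow> nat \<Rightarrow> nat \<Rightarrow> nat \<Rightarrow> nat \<Rightarrow> bool" where
  "mode_step P N p i p' i' \<longleftrightarrow>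
     (i < N - 1 \<and> p' = p \<and> i' = i + 1) \<or>
     (i = N - 1 \<and> p' = p \<and> i' = N - 1) \<or>
     (i = N - 1 \<and> p' \<in> P \<and> p' \<noteq> p \<and> i' = 0)"

definition T_sys ::
  "nat \<Rightarrow> nat \<Rightarrow> (nat \<Rightarrow> real \<Rightarrow> real^'n \<Rightarrow> real^'n) \<Rightarrow> real \<Rightarrow>
   ((real^'n) \<times> nat \<times> nat, nat, real^'n) tsys" where
  "T_sys m N phi ts =
     \<lparr> states = UNIV \<times> {1..m} \<times> {0..<N},
       labels = {1..m},
       trans = {((x, p, i), l, (x', p', i')) | x p i l x' p' i'.
                  (x, p, i) \<in> UNIV \<times> {1..m} \<times> {0..<N} \<and> l = p \<and> x' = phi p ts x \<and>
                  mode_step {1..m} N p i p' i'},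
       outs = UNIV,
       outmap = (\<lambda>(x, p, i). x),
       inits = UNIV \<times> {1..m} \<times> {0} \<rparr>"

definition lattice :: "real \<Rightarrow> (real^'n) set" where
  "lattice eta = {q. \<forall>i. \<exists>k::int. q $ i = of_int k * (2 * eta / sqrt (real CARD('n)))}"

definition T_abs ::
  "nat \<Rightarrow> nat \<Rightarrow> (nat \<Rightarrow> real \<Rightarrow> real^'n \<Rightarrow> real^'n) \<Rightarrow> real \<Rightarrow> real \<Rightarrow>
   ((real^'n) \<times> nat \<times> nat, nat, real^'n) tsys" where
  "T_abs m N phi ts eta =
     \<lparr> states = lattice eta \<times> {1..m} \<times> {0..<N},
       labels = {1..m},
       trans = {((q, p, i), l, (q', p', i')) | q p i l q' p' i'.
                  (q, p, i) \<in> lattice eta \<times> {1..m} \<times> {0..<N} \<and> q' \<in> lattice eta \<and>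
                  l = p \<and> norm (phi p ts q - q') \<le> eta \<and>
                  mode_step {1..m} N p i p' i'},
       outs = UNIV,
       outmap = (\<lambda>(q, p, i). q),
       inits = lattice eta \<times> {1..m} \<times> {0} \<rparr>"

end

theory Submission
  imports Defs
begin

text \<open>
  A concrete state \<open>(x, p, i)\<close> is related to the abstract state \<open>(q, p, i)\<close>
  (same mode, same dwell counter, \<open>q\<close> a lattice point) whenever \<open>V p x q \<le> b i\<close>, where
  \<open>b i = a (\<theta> + (1 - \<theta>) c ^ i)\<close> with \<open>a = alpha_lo \<epsilon>\<close>, \<open>c = exp (- \<kappa> ts)\<close> and \<open>\<theta>\<close> the
  weight appearing in the bound on \<open>\<eta>\<close>.  One step of subsystem \<open>p\<close> contracts \<open>V p\<close> by the
  factor \<open>c\<close> (Lyapunov decay); replacing the successor of \<open>q\<close> by a lattice point at distance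
  \<open>\<le> \<eta>\<close> costs at most \<open>\<gamma> \<eta> \<le> r = \<theta> (1 - c) a\<close>; and \<open>c (b i) + r = b (i + 1)\<close>.  Once the dwell
  time has elapsed, \<open>b N \<le> b (N - 1)\<close>, and a mode switch multiplies \<open>V\<close> by at most \<open>\<mu>\<close>, where
  \<open>\<mu> (b N) = b 0\<close> by the choice of \<open>\<theta>\<close>.  Since all \<open>b i \<le> a\<close>, related states have outputs at
  distance at most \<open>\<epsilon>\<close>.
\<close>

subsection \<open>Class K-infinity functions\<close>

lemma Kinf_mono: "Kinf a \<Longrightarrow> 0 \<le> s \<Longrightarrow> s \<le> t \<Longrightarrow> a s \<le> a t"
  unfolding Kinf_def by (auto intro: strict_mono_on_leD)

lemma Kinf_pos: "Kinf a \<Longrightarrow> 0 < s \<Longrightarrow> 0 < a s"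
  unfolding Kinf_def using strict_mono_onD[of "{0..}" a 0 s] by auto

lemma Kinf_le_imp_le:
  assumes "Kinf a" "0 \<le> s" "0 \<le> t" "a s \<le> a t"
  shows "s \<le> t"
proof (rule ccontr)
  assume "\<not> s \<le> t"
  then have "a t < a s"
    using assms strict_mono_onD[of "{0..}" a t s] unfolding Kinf_def by auto
  then show False using assms(4) by simp
qed

lemma Kinf_max:
  assumes "Kinf a" "Kinf b"
  shows "Kinf (\<lambda>r. max (a r) (b r))"
proof -
  have "continuous_on {0..} (\<lambda>r. max (a r) (b r))"
    using assms unfolding Kinf_def by (auto intro: continuous_on_max)
  moreover have "strict_mono_on {0..} (\<lambda>r. max (a r) (b r))"
    using assms unfolding Kinf_def strict_mono_on_def by (auto simp: max_def) (smt (verit))+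
  moreover have "filterlim (\<lambda>r. max (a r) (b r)) at_top at_top"
    using assms unfolding Kinf_def by (rule_tac filterlim_at_top_mono[of a]) auto
  ultimately show ?thesis using assms unfolding Kinf_def by auto
qed

lemma Kinf_Max:
  assumes "finite A" "A \<noteq> {}" "\<And>p. p \<in> A \<Longrightarrow> Kinf (g p)"
  shows "Kinf (\<lambda>r. Max ((\<lambda>p. g p r) ` A))"
  using assms
proof (induction A rule: finite_ne_induct)
  case (singleton x)
  then show ?case by simp
next
  case (insert x F)
  then have "Kinf (\<lambda>r. max (g x r) (Max ((\<lambda>p. g p r) ` F)))"
    by (intro Kinf_max) auto
  then show ?case using insert by simp
qed

text \<open>\<open>Kinf_inv a\<close> is a genuine inverse on \<open>[0, \<infinity>)\<close>: surjectivity follows from the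
  intermediate value theorem and unboundedness, uniqueness from strict monotonicity.\<close>
lemma Kinf_inv:
  assumes K: "Kinf a" and r: "r \<ge> 0"
  shows "0 \<le> Kinf_inv a r \<and> a (Kinf_inv a r) = r"
proof -
  from K have "eventually (\<lambda>s. a s \<ge> r) at_top"
    unfolding Kinf_def by (simp add: filterlim_at_top)
  then obtain B where B: "\<And>s. s \<ge> B \<Longrightarrow> a s \<ge> r" by (auto simp: eventually_at_top_linorder)
  have "\<exists>s. 0 \<le> s \<and> s \<le> max B 0 \<and> a s = r"
    using K r B[of "max B 0"] unfolding Kinf_def
    by (intro IVT') (auto elim: continuous_on_subset)
  then obtain s where s: "0 \<le> s" "a s = r" by auto
  have "\<exists>!s. 0 \<le> s \<and> a s = r"
  proof (rule ex1I[of _ s])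
    fix s' assume "0 \<le> s' \<and> a s' = r"
    then show "s' = s" using s K unfolding Kinf_def by (auto dest: strict_mono_on_eqD)
  qed (use s in auto)
  then show ?thesis unfolding Kinf_inv_def by (rule theI')
qed

lemma Kinf_le_of_le_inv:
  assumes "Kinf a" "0 \<le> r" "0 \<le> s" "s \<le> Kinf_inv a r"
  shows "a s \<le> r"
  using Kinf_inv[OF assms(1,2)] Kinf_mono[OF assms(1) assms(3,4)] by simp

lemma Max_family_le_of_le_inv:
  assumes A: "finite A" "A \<noteq> {}" and K: "\<And>p. p \<in> A \<Longrightarrow> Kinf (g p)" and p: "p \<in> A"
    and r: "0 \<le> r" and s: "0 \<le> s" "s \<le> Kinf_inv (\<lambda>r. Max ((\<lambda>p. g p r) ` A)) r"
  shows "g p s \<le> r"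
proof -
  have "g p s \<le> Max ((\<lambda>p. g p s) ` A)" using A p by (intro Max_ge) auto
  also have "\<dots> \<le> r" by (rule Kinf_le_of_le_inv[OF Kinf_Max[OF A K] r s])
  finally show ?thesis .
qed

subsection \<open>Decay of a Lyapunov function along pairs of trajectories\<close>

lemma smooth_has_derivative:
  "smooth g \<Longrightarrow> (g has_derivative frechet_derivative g (at z)) (at z)"
  using frechet_derivative_works unfolding smooth_def by (metis iter_dderiv.simps(1))

lemma derivative_along_flows:
  fixes f :: "'a::euclidean_space \<Rightarrow> 'a" and V :: "'a \<Rightarrow> 'a \<Rightarrow> real"
  defines "g \<equiv> (\<lambda>(x, y). V x y)"
  assumes sm: "smooth g" and F: "is_flow f phi" and s: "s \<ge> 0"
  shows "((\<lambda>s. V (phi s x) (phi s y)) has_real_derivative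
           frechet_derivative g (at (phi s x, phi s y)) (f (phi s x), f (phi s y)))
         (at s within {0..})"
proof -
  let ?D = "frechet_derivative g (at (phi s x, phi s y))"
  have "((\<lambda>s. phi s x) has_vector_derivative f (phi s x)) (at s within {0..})"
    and "((\<lambda>s. phi s y) has_vector_derivative f (phi s y)) (at s within {0..})"
    using F s unfolding is_flow_def by auto
  then have pair: "((\<lambda>s. (phi s x, phi s y)) has_derivative
                     (\<lambda>h. h *\<^sub>R (f (phi s x), f (phi s y)))) (at s within {0..})"
    using has_derivative_Pair unfolding has_vector_derivative_def by fastforce
  have gd: "(g has_derivative ?D) (at (phi s x, phi s y))"
    by (rule smooth_has_derivative[OF sm])
  let ?w = "(f (phi s x), f (phi s y))"
  have "((\<lambda>s. g (phi s x, phi s y)) has_derivative (\<lambda>h. ?D (h *\<^sub>R ?w))) (at s within {0..})"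
    by (rule has_derivative_compose[OF pair gd])
  moreover have "?D (h *\<^sub>R ?w) = ?D ?w * h" for h
    using linear_cmul[OF has_derivative_linear[OF gd], of h ?w] by (simp only: real_scaleR_def mult.commute)
  ultimately show ?thesis
    unfolding has_field_derivative_def g_def by simp
qed

text \<open>The dissipation inequality integrates to exponential decay:
  \<open>V (phi t x) (phi t y) \<le> exp (- k t) V x y\<close>, because \<open>exp (k s) V (phi s x) (phi s y)\<close>
  has a nonpositive derivative.\<close>
lemma lyap_decay:
  fixes f :: "'a::euclidean_space \<Rightarrow> 'a"
  assumes L: "deltaGAS_Lyapunov f V al au k" and F: "is_flow f phi" and t: "t \<ge> 0"
  shows "V (phi t x) (phi t y) \<le> exp (- k * t) * V x y"
proof -
  define g where "g = (\<lambda>(x, y). V x y)"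
  define D where "D = (\<lambda>s. frechet_derivative g (at (phi s x, phi s y)) (f (phi s x), f (phi s y)))"
  define W where "W = (\<lambda>s. V (phi s x) (phi s y))"
  define U where "U = (\<lambda>s. exp (k * s) * W s)"
  have sm: "smooth g" and dissip: "\<And>s. D s \<le> - k * W s"
    using L unfolding deltaGAS_Lyapunov_def g_def D_def W_def by auto
  have Ud: "(U has_real_derivative exp (k * s) * (k * W s + D s)) (at s within {0..})"
    if "s \<ge> 0" for s
    using derivative_along_flows[OF sm[unfolded g_def] F that, of x y]
    unfolding U_def W_def D_def g_def
    by (auto intro!: derivative_eq_intros simp: algebra_simps)
  have "U t \<le> U 0"
  proof (rule DERIV_nonpos_imp_decreasing_open[OF t])
    fix s assume s: "0 < s" "s < t"
    have "at s within {0..} = at s"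
      by (rule at_within_interior) (use s in auto)
    then have "(U has_real_derivative exp (k * s) * (k * W s + D s)) (at s)"
      using Ud[of s] s by simp
    moreover have "exp (k * s) * (k * W s + D s) \<le> 0"
      using dissip[of s] by (intro mult_nonneg_nonpos) auto
    ultimately show "\<exists>y. (U has_real_derivative y) (at s) \<and> y \<le> 0" by blast
  next
    show "continuous_on {0..t} U"
      unfolding continuous_on_eq_continuous_within
    proof
      fix s assume "s \<in> {0..t}"
      then have "continuous (at s within {0..}) U"
        using Ud[of s] by (auto intro: DERIV_continuous)
      then show "continuous (at s within {0..t}) U"
        by (rule continuous_within_subset) auto
    qed
  qed
  moreover have "U 0 = V x y" using F unfolding U_def W_def is_flow_def by simp
  ultimately have "exp (k * t) * W t \<le> V x y" unfolding U_def by simp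
  then show ?thesis unfolding W_def by (simp add: exp_minus field_simps mult.commute)
qed

subsection \<open>The lattice is an \<open>\<eta>\<close>-net\<close>

text \<open>Rounding each coordinate to the nearest multiple of the mesh \<open>h = 2\<eta>/\<surd>n\<close> moves a point
  by at most \<open>h/2\<close> per coordinate, hence by at most \<open>\<surd>n h/2 = \<eta>\<close> in norm.\<close>
lemma lattice_cover:
  fixes x :: "real^'n"
  assumes eta: "eta > 0"
  shows "\<exists>q\<in>lattice eta. norm (x - q) \<le> eta"
proof -
  define n where "n = real CARD('n)"
  define h where "h = 2 * eta / sqrt n"
  have n: "n > 0" unfolding n_def by simp
  then have h: "h > 0" using eta unfolding h_def by simp
  define q :: "real^'n" where "q = (\<chi> i. of_int (round (x $ i / h)) * h)"
  have "q \<in> lattice eta" unfolding lattice_def q_def h_def n_def by auto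
  have coord: "\<bar>x $ i - q $ i\<bar> \<le> h / 2" for i
  proof -
    have "x $ i - q $ i = - ((of_int (round (x $ i / h)) - x $ i / h) * h)"
      using h unfolding q_def by (simp add: field_simps)
    then have "\<bar>x $ i - q $ i\<bar> = \<bar>of_int (round (x $ i / h)) - x $ i / h\<bar> * h"
      using h by (simp add: abs_mult)
    also have "\<dots> \<le> 1 / 2 * h"
      using h by (intro mult_right_mono of_int_round_abs_le) auto
    finally show ?thesis by simp
  qed
  have "norm (x - q) \<le> norm ((\<chi> i. h / 2) :: real^'n)"
    by (rule norm_le_componentwise_cart) (use coord h in auto)
  also have "norm ((\<chi> i. h / 2) :: real^'n) = sqrt (n * (h / 2)\<^sup>2)"
    using h unfolding norm_vec_def L2_set_def n_def by simp
  also have "\<dots> = eta"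
    using n eta unfolding h_def by (simp add: power_divide real_sqrt_mult)
  finally show ?thesis using \<open>q \<in> lattice eta\<close> by blast
qed

lemma T_sys_trans:
  "((x, p, i), l, (x', p', i')) \<in> trans (T_sys m N phi ts) \<longleftrightarrow>
     p \<in> {1..m} \<and> i < N \<and> l = p \<and> x' = phi p ts x \<and> mode_step {1..m} N p i p' i'"
  by (auto simp: T_sys_def)

lemma T_abs_trans:
  "((q, p, i), l, (q', p', i')) \<in> trans (T_abs m N phi ts eta) \<longleftrightarrow>
     q \<in> lattice eta \<and> p \<in> {1..m} \<and> i < N \<and> q' \<in> lattice eta \<and> l = p \<and>
     norm (phi p ts q - q') \<le> eta \<and> mode_step {1..m} N p i p' i'"
  by (auto simp: T_abs_def)

text \<open>The weight \<open>\<theta> = (1/\<mu> - C)/(1 - C)\<close>, \<open>C = exp (- \<kappa> N ts)\<close>, lies in \<open>[0, 1]\<close> exactly because the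
  dwell time exceeds \<open>log \<mu> / \<kappa>\<close>, and it is chosen so that \<open>\<mu> (\<theta> + (1 - \<theta>) C) = 1\<close>.\<close>
lemma dwell_time_weight:
  fixes kappa ts mu :: real and N :: nat
  defines "C \<equiv> exp (- kappa * (real N * ts))"
  assumes kappa: "kappa > 0" and ts: "ts > 0" and N: "N \<ge> 1" and mu: "mu \<ge> 1"
    and dwell: "real N * ts > ln mu / kappa"
  shows "0 \<le> (1 / mu - C) / (1 - C)" "(1 / mu - C) / (1 - C) \<le> 1"
    and "mu * ((1 / mu - C) / (1 - C) + (1 - (1 / mu - C) / (1 - C)) * exp (- kappa * ts) ^ N) = 1"
proof -
  have C: "0 < C" "C < 1" unfolding C_def using kappa ts N by auto
  have "ln mu < kappa * (real N * ts)" using dwell kappa by (simp add: field_simps)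
  then have "C < exp (- ln mu)" unfolding C_def by simp
  also have "exp (- ln mu) = 1 / mu" using mu by (simp add: exp_minus inverse_eq_divide)
  finally have "C < 1 / mu" .
  then show "0 \<le> (1 / mu - C) / (1 - C)" using C by simp
  show "(1 / mu - C) / (1 - C) \<le> 1" using C mu by (simp add: field_simps)
  have "exp (- kappa * ts) ^ N = C"
    unfolding C_def by (simp add: exp_of_nat_mult[symmetric] algebra_simps)
  then show "mu * ((1 / mu - C) / (1 - C) + (1 - (1 / mu - C) / (1 - C)) * exp (- kappa * ts) ^ N) = 1"
    using C mu by (simp add: field_simps)
qed

lemma geometric_thresholds:
  fixes a c th mu :: real and N :: nat
  defines "b \<equiv> \<lambda>i::nat. a * (th + (1 - th) * c ^ i)"
    and "r \<equiv> th * (1 - c) * a"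
  assumes a: "0 \<le> a" and c: "0 \<le> c" "c \<le> 1" and th: "th \<le> 1"
    and N: "N \<ge> 1" and weight: "mu * (th + (1 - th) * c ^ N) = 1"
  shows "c * b i + r = b (Suc i)"
    and "b i \<le> a"
    and "c * b (N - 1) + r \<le> b (N - 1)"
    and "mu * (c * b (N - 1) + r) = b 0"
proof -
  show step: "c * b i + r = b (Suc i)" for i
    unfolding b_def r_def by (simp add: algebra_simps)
  have "(1 - th) * c ^ i \<le> (1 - th) * 1" using c th by (intro mult_left_mono power_le_one) auto
  then show "b i \<le> a" unfolding b_def using a by (simp add: mult_left_le)
  have last: "c * b (N - 1) + r = b N" using step[of "N - 1"] N by simp
  have "c ^ N \<le> c ^ (N - 1)" using c by (intro power_decreasing) auto
  then have "b N \<le> b (N - 1)" unfolding b_def using a th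
    by (intro mult_left_mono add_left_mono) auto
  then show "c * b (N - 1) + r \<le> b (N - 1)" using last by simp
  have "mu * b N = a * (mu * (th + (1 - th) * c ^ N))"
    unfolding b_def by (simp add: algebra_simps)
  then show "mu * (c * b (N - 1) + r) = b 0"
    unfolding last using weight by (simp add: b_def)
qed

subsection \<open>Approximate bisimulation from an invariant threshold\<close>

locale threshold_abstraction =
  fixes m N :: nat
    and phi :: "nat \<Rightarrow> real \<Rightarrow> real^'n \<Rightarrow> real^'n"
    and V :: "nat \<Rightarrow> real^'n \<Rightarrow> real^'n \<Rightarrow> real"
    and ts eta eps c r mu :: real
    and b :: "nat \<Rightarrow> real"
  assumes N_pos: "N \<ge> 1"
    and eta_pos: "eta > 0"
    and c_nonneg: "0 \<le> c"
    and contract: "\<And>p x y. p \<in> {1..m} \<Longrightarrow> V p (phi p ts x) (phi p ts y) \<le> c * V p x y"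
    and robust: "\<And>p x y z. p \<in> {1..m} \<Longrightarrow> norm (y - z) \<le> eta \<Longrightarrow> V p x y \<le> V p x z + r"
    and switch: "\<And>p p' x y. p \<in> {1..m} \<Longrightarrow> p' \<in> {1..m} \<Longrightarrow> V p' x y \<le> mu * V p x y"
    and mu_nonneg: "0 \<le> mu"
    and threshold_step: "\<And>i. i < N - 1 \<Longrightarrow> c * b i + r \<le> b (Suc i)"
    and threshold_dwell: "c * b (N - 1) + r \<le> b (N - 1)"
    and threshold_switch: "mu * (c * b (N - 1) + r) \<le> b 0"
    and output_close: "\<And>p x y i. p \<in> {1..m} \<Longrightarrow> i < N \<Longrightarrow> V p x y \<le> b i \<Longrightarrow> norm (x - y) \<le> eps"
    and initial: "\<And>p x y. p \<in> {1..m} \<Longrightarrow> norm (x - y) \<le> eta \<Longrightarrow> V p x y \<le> b 0"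
begin

definition invariant_rel :: "(((real^'n) \<times> nat \<times> nat) \<times> ((real^'n) \<times> nat \<times> nat)) set" where
  "invariant_rel = {((x, p, i), (q, p, i)) | x q p i.
     q \<in> lattice eta \<and> p \<in> {1..m} \<and> i < N \<and> V p x q \<le> b i}"

lemma invariant_rel_iff:
  "((x, p, i), (q, p', i')) \<in> invariant_rel \<longleftrightarrow>
     q \<in> lattice eta \<and> p \<in> {1..m} \<and> i < N \<and> p' = p \<and> i' = i \<and> V p x q \<le> b i"
  unfolding invariant_rel_def by auto

lemma invariant_step:
  assumes p: "p \<in> {1..m}" and i: "i < N" and V: "V p x q \<le> b i"
    and q': "norm (phi p ts q - q') \<le> eta" and ms: "mode_step {1..m} N p i p' i'"
  shows "V p' (phi p ts x) q' \<le> b i'"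
proof -
  have "V p (phi p ts x) q' \<le> V p (phi p ts x) (phi p ts q) + r"
    using robust[OF p] q' by (simp add: norm_minus_commute)
  also have "V p (phi p ts x) (phi p ts q) \<le> c * b i"
    using contract[OF p, of x q] mult_left_mono[OF V c_nonneg] by linarith
  finally have flowed: "V p (phi p ts x) q' \<le> c * b i + r" by simp
  from ms show ?thesis
    unfolding mode_step_def
  proof (elim disjE conjE)
    assume "i < N - 1" "p' = p" "i' = i + 1"
    then show ?thesis using flowed threshold_step by fastforce
  next
    assume "i = N - 1" "p' = p" "i' = N - 1"
    then show ?thesis using flowed threshold_dwell by simp
  next
    assume switching: "i = N - 1" "p' \<in> {1..m}" "i' = 0"
    have "V p' (phi p ts x) q' \<le> mu * V p (phi p ts x) q'" using switch p switching by blast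
    also have "\<dots> \<le> mu * (c * b (N - 1) + r)"
      using flowed switching mu_nonneg by (simp add: mult_left_mono)
    finally show ?thesis using threshold_switch switching by simp
  qed
qed

lemma mode_step_in_range:
  "mode_step {1..m} N p i p' i' \<Longrightarrow> p \<in> {1..m} \<Longrightarrow> i < N \<Longrightarrow> p' \<in> {1..m} \<and> i' < N"
  unfolding mode_step_def using N_pos by auto

lemma invariant_rel_succ:
  assumes "((x, p, i), (q, p, i)) \<in> invariant_rel" and "q' \<in> lattice eta"
    and "norm (phi p ts q - q') \<le> eta" and "mode_step {1..m} N p i p' i'"
  shows "((phi p ts x, p', i'), (q', p', i')) \<in> invariant_rel"
  using assms invariant_step[of p i x q q' p' i'] mode_step_in_range[of p i p' i']
  by (simp add: invariant_rel_iff)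

lemma invariant_rel_output:
  "(s, t) \<in> invariant_rel \<Longrightarrow> dist (outmap (T_sys m N phi ts) s) (outmap (T_abs m N phi ts eta) t) \<le> eps"
  unfolding invariant_rel_def using output_close by (auto simp: T_sys_def T_abs_def dist_norm)

text \<open>A concrete transition is matched by rounding the abstract successor to a nearby lattice point.\<close>
lemma invariant_rel_forward:
  assumes R: "((x, p, i), t) \<in> invariant_rel" and tr: "((x, p, i), l, s') \<in> trans (T_sys m N phi ts)"
  shows "\<exists>t'. (t, l, t') \<in> trans (T_abs m N phi ts eta) \<and> (s', t') \<in> invariant_rel"
proof -
  obtain q where t: "t = (q, p, i)" and q: "q \<in> lattice eta" using R unfolding invariant_rel_def by auto
  obtain x' p' i' where s': "s' = (x', p', i')" by (cases s')
  from tr have l: "l = p" and x': "x' = phi p ts x" and ms: "mode_step {1..m} N p i p' i'"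
    and p: "p \<in> {1..m}" and i: "i < N"
    unfolding s' T_sys_trans by auto
  obtain q' where q': "q' \<in> lattice eta" "norm (phi p ts q - q') \<le> eta"
    using lattice_cover[OF eta_pos, of "phi p ts q"] by (auto simp: norm_minus_commute)
  have "(t, l, (q', p', i')) \<in> trans (T_abs m N phi ts eta)"
    using q q' p i l ms unfolding t by (simp add: T_abs_trans)
  moreover have "(s', (q', p', i')) \<in> invariant_rel"
    using invariant_rel_succ[OF R[unfolded t] q' ms] x' unfolding s' by simp
  ultimately show ?thesis by blast
qed

text \<open>An abstract transition is matched by the exact concrete successor.\<close>
lemma invariant_rel_backward:
  assumes R: "(s, (q, p, i)) \<in> invariant_rel" and tr: "((q, p, i), l, t') \<in> trans (T_abs m N phi ts eta)"
  shows "\<exists>s'. (s, l, s') \<in> trans (T_sys m N phi ts) \<and> (s', t') \<in> invariant_rel"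
proof -
  obtain x where s: "s = (x, p, i)" using R unfolding invariant_rel_def by auto
  obtain q' p' i' where t': "t' = (q', p', i')" by (cases t')
  from tr have l: "l = p" and q': "q' \<in> lattice eta" "norm (phi p ts q - q') \<le> eta"
    and ms: "mode_step {1..m} N p i p' i'" and p: "p \<in> {1..m}" and i: "i < N"
    unfolding t' T_abs_trans by auto
  have "(s, l, (phi p ts x, p', i')) \<in> trans (T_sys m N phi ts)"
    using p i l ms unfolding s by (simp add: T_sys_trans)
  moreover have "((phi p ts x, p', i'), t') \<in> invariant_rel"
    using invariant_rel_succ[OF R[unfolded s] q' ms] unfolding t' .
  ultimately show ?thesis by blast
qed

lemma invariant_rel_bisim:
  "approx_bisim_rel (T_sys m N phi ts) (T_abs m N phi ts eta) eps invariant_rel"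
proof -
  have "invariant_rel \<subseteq> states (T_sys m N phi ts) \<times> states (T_abs m N phi ts eta)"
    unfolding invariant_rel_def T_sys_def T_abs_def by auto
  moreover have "\<And>s t. (s, t) \<in> invariant_rel \<Longrightarrow> \<exists>x p i q. s = (x, p, i) \<and> t = (q, p, i)"
    unfolding invariant_rel_def by auto
  ultimately show ?thesis
    unfolding approx_bisim_rel_def
    using invariant_rel_output invariant_rel_forward invariant_rel_backward by fastforce
qed

text \<open>Every initial state is related to an initial state of the other system: a concrete
  \<open>x\<close> to a lattice point within \<open>\<eta>\<close>, a lattice point to itself.\<close>
theorem bisimilar: "approx_bisimilar (T_sys m N phi ts) eps (T_abs m N phi ts eta)"
  unfolding approx_bisimilar_def
proof (intro exI conjI ballI)
  show "approx_bisim_rel (T_sys m N phi ts) (T_abs m N phi ts eta) eps invariant_rel"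
    by (rule invariant_rel_bisim)
next
  fix z assume "z \<in> inits (T_sys m N phi ts)"
  then obtain x p where z: "z = (x, p, 0)" and p: "p \<in> {1..m}" unfolding T_sys_def by auto
  obtain q where q: "q \<in> lattice eta" "norm (x - q) \<le> eta" using lattice_cover[OF eta_pos] by blast
  then show "\<exists>q2\<in>inits (T_abs m N phi ts eta). (z, q2) \<in> invariant_rel"
    using initial[OF p] p N_pos unfolding z
    by (intro bexI[of _ "(q, p, 0)"]) (auto simp: invariant_rel_iff T_abs_def)
next
  fix z assume "z \<in> inits (T_abs m N phi ts eta)"
  then obtain q p where z: "z = (q, p, 0)" and p: "p \<in> {1..m}" and q: "q \<in> lattice eta"
    unfolding T_abs_def by auto
  then show "\<exists>q1\<in>inits (T_sys m N phi ts). (q1, z) \<in> invariant_rel"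
    using initial[OF p, of q q] eta_pos N_pos
    by (intro bexI[of _ "(q, p, 0)"]) (auto simp: invariant_rel_iff T_sys_def)
qed

end

lemma deltaGAS_abstraction:
  fixes f :: "nat \<Rightarrow> real^'n \<Rightarrow> real^'n"
    and phi :: "nat \<Rightarrow> real \<Rightarrow> real^'n \<Rightarrow> real^'n"
    and V :: "nat \<Rightarrow> real^'n \<Rightarrow> real^'n \<Rightarrow> real"
    and al au gam :: "nat \<Rightarrow> real \<Rightarrow> real"
    and kappa ts :: real
  defines "c \<equiv> exp (- kappa * ts)"
  assumes N: "N \<ge> 1" and ts: "ts \<ge> 0" and kappa: "kappa \<ge> 0"
    and eta: "eta > 0" and eps: "eps \<ge> 0"
    and flow: "\<And>p. p \<in> {1..m} \<Longrightarrow> is_flow (f p) (phi p)"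
    and lyap: "\<And>p. p \<in> {1..m} \<Longrightarrow> deltaGAS_Lyapunov (f p) (V p) (al p) (au p) (kap p)"
    and kappa_le: "\<And>p. p \<in> {1..m} \<Longrightarrow> kappa \<le> kap p"
    and switch: "\<And>p p' x y. p \<in> {1..m} \<Longrightarrow> p' \<in> {1..m} \<Longrightarrow> V p x y \<le> mu * V p' x y"
    and gam: "\<And>p x y z. p \<in> {1..m} \<Longrightarrow> \<bar>V p x y - V p x z\<bar> \<le> gam p (norm (y - z))"
    and gam_Kinf: "\<And>p. p \<in> {1..m} \<Longrightarrow> Kinf (gam p)"
    and gam_eta: "\<And>p. p \<in> {1..m} \<Longrightarrow> gam p eta \<le> th * (1 - c) * a"
    and al_eps: "\<And>p. p \<in> {1..m} \<Longrightarrow> a \<le> al p eps"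
    and au_eta: "\<And>p. p \<in> {1..m} \<Longrightarrow> au p eta \<le> a"
    and a: "0 \<le> a" and mu: "0 \<le> mu"
    and th: "th \<le> 1" and weight: "mu * (th + (1 - th) * c ^ N) = 1"
  shows "approx_bisimilar (T_sys m N phi ts) eps (T_abs m N phi ts eta)"
proof -
  define b where "b = (\<lambda>i::nat. a * (th + (1 - th) * c ^ i))"
  define r where "r = th * (1 - c) * a"
  have c: "0 \<le> c" "c \<le> 1" unfolding c_def using ts kappa by auto
  have V_bounds: "al p (norm (x - y)) \<le> V p x y" "V p x y \<le> au p (norm (x - y))"
    and al_Kinf: "Kinf (al p)" and au_Kinf: "Kinf (au p)" and V_nonneg: "0 \<le> V p x y"
    if "p \<in> {1..m}" for p x y
    using lyap[OF that] unfolding deltaGAS_Lyapunov_def by auto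
  have contract: "V p (phi p ts x) (phi p ts y) \<le> c * V p x y" if p: "p \<in> {1..m}" for p x y
  proof -
    have "V p (phi p ts x) (phi p ts y) \<le> exp (- kap p * ts) * V p x y"
      by (rule lyap_decay[OF lyap[OF p] flow[OF p] ts])
    also have "\<dots> \<le> c * V p x y"
      unfolding c_def using kappa_le[OF p] ts V_nonneg[OF p]
      by (intro mult_right_mono) (auto intro: mult_right_mono)
    finally show ?thesis .
  qed
  have robust: "V p x y \<le> V p x z + r" if p: "p \<in> {1..m}" and yz: "norm (y - z) \<le> eta" for p x y z
  proof -
    have "V p x y \<le> V p x z + gam p (norm (y - z))" using gam[OF p, of x y z] by linarith
    also have "gam p (norm (y - z)) \<le> gam p eta" using Kinf_mono[OF gam_Kinf[OF p] _ yz] by simp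
    finally show ?thesis using gam_eta[OF p] unfolding r_def by linarith
  qed
  have output_close: "norm (x - y) \<le> eps" if p: "p \<in> {1..m}" and V: "V p x y \<le> b i" for p x y i
  proof (rule Kinf_le_imp_le[OF al_Kinf[OF p] _ eps])
    show "al p (norm (x - y)) \<le> al p eps"
      using V_bounds(1)[OF p, of x y] V geometric_thresholds(2)[OF a c th N weight, of i] al_eps[OF p]
      unfolding b_def by linarith
  qed simp
  have initial: "V p x y \<le> b 0" if p: "p \<in> {1..m}" and xy: "norm (x - y) \<le> eta" for p x y
    using V_bounds(2)[OF p, of x y] Kinf_mono[OF au_Kinf[OF p] _ xy] au_eta[OF p]
    unfolding b_def by simp
  have threshold_step: "c * b i + r \<le> b (Suc i)" for i
    unfolding b_def r_def by (rule eq_refl, rule geometric_thresholds(1)[OF a c th N weight])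
  have threshold_dwell: "c * b (N - 1) + r \<le> b (N - 1)"
    unfolding b_def r_def by (rule geometric_thresholds(3)[OF a c th N weight])
  have threshold_switch: "mu * (c * b (N - 1) + r) \<le> b 0"
    unfolding b_def r_def by (rule eq_refl, rule geometric_thresholds(4)[OF a c th N weight])
  have "threshold_abstraction m N phi V ts eta eps c r mu b"
    using N eta c(1) contract robust switch mu threshold_step threshold_dwell threshold_switch
      output_close initial
    by unfold_locales auto
  then show ?thesis by (rule threshold_abstraction.bisimilar)
qed

text \<open>It remains to compute the mode-uniform constants: \<open>\<kappa> > 0\<close> and \<open>a = alpha_lo \<epsilon> > 0\<close> as
  minima of positive quantities, \<open>\<theta>\<close> from the dwell-time condition, and \<open>gamma \<eta> \<le> \<theta> (1 - c) a\<close>,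
  \<open>alpha_up \<eta> \<le> a\<close> from the bound on \<open>\<eta>\<close>, \<open>gamma\<close> and \<open>alpha_up\<close> being maxima of K-infinity functions.\<close>
theorem theorem6:
  fixes m N :: nat
    and f :: "nat \<Rightarrow> real^'n \<Rightarrow> real^'n"
    and phi :: "nat \<Rightarrow> real \<Rightarrow> real^'n \<Rightarrow> real^'n"
    and V :: "nat \<Rightarrow> real^'n \<Rightarrow> real^'n \<Rightarrow> real"
    and al au gam :: "nat \<Rightarrow> real \<Rightarrow> real"
    and kap :: "nat \<Rightarrow> real"
    and mu ts eta eps :: real
  defines "alpha_lo \<equiv> (\<lambda>r. Min ((\<lambda>p. al p r) ` {1..m}))"
    and "alpha_up \<equiv> (\<lambda>r. Max ((\<lambda>p. au p r) ` {1..m}))"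
    and "kappa \<equiv> Min (kap ` {1..m})"
    and "gamma \<equiv> (\<lambda>r. Max ((\<lambda>p. gam p r) ` {1..m}))"
    and "td \<equiv> real N * ts"
  assumes m: "m \<ge> 1"
    and N: "N \<ge> 1"
    and ts: "ts > 0" and eta: "eta > 0" and eps: "eps > 0"
    and lip: "\<forall>p\<in>{1..m}. local_lipschitz (UNIV::real set) UNIV (\<lambda>_. f p)"
    and flow: "\<forall>p\<in>{1..m}. is_flow (f p) (phi p)"
    and lyap: "\<forall>p\<in>{1..m}. deltaGAS_Lyapunov (f p) (V p) (al p) (au p) (kap p)"
    and mu: "mu \<ge> 1"
    and mu_bound: "\<forall>p\<in>{1..m}. \<forall>p'\<in>{1..m}. \<forall>x y. V p x y \<le> mu * V p' x y"
    and gam: "\<forall>p\<in>{1..m}. Kinf (gam p) \<and>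
                (\<forall>x y z. \<bar>V p x y - V p x z\<bar> \<le> gam p (norm (y - z)))"
    and dwell: "td > ln mu / kappa"
    and eta_bound: "eta \<le> min
        (Kinf_inv gamma (((1 / mu - exp (- kappa * td)) / (1 - exp (- kappa * td)))
                          * (1 - exp (- kappa * ts)) * alpha_lo eps))
        (Kinf_inv alpha_up (alpha_lo eps))"
  shows "approx_bisimilar (T_sys m N phi ts) eps (T_abs m N phi ts eta)"
proof -
  have P: "finite {1..m}" "{1..m} \<noteq> {}" using m by auto
  have kap_pos: "\<And>p. p \<in> {1..m} \<Longrightarrow> kap p > 0" and al_Kinf: "\<And>p. p \<in> {1..m} \<Longrightarrow> Kinf (al p)"
    and au_Kinf: "\<And>p. p \<in> {1..m} \<Longrightarrow> Kinf (au p)"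
    using lyap unfolding deltaGAS_Lyapunov_def by auto
  have kappa_pos: "kappa > 0" unfolding kappa_def using P kap_pos by simp
  define a where "a = alpha_lo eps"
  have a_pos: "a > 0" unfolding a_def alpha_lo_def using P Kinf_pos[OF al_Kinf eps] by simp
  define th where "th = (1 / mu - exp (- kappa * td)) / (1 - exp (- kappa * td))"
  have th: "0 \<le> th" "th \<le> 1" "mu * (th + (1 - th) * exp (- kappa * ts) ^ N) = 1"
    using dwell_time_weight[OF kappa_pos ts N mu dwell[unfolded td_def]] unfolding th_def td_def .
  define r where "r = th * (1 - exp (- kappa * ts)) * a"
  have r: "0 \<le> r" unfolding r_def using th kappa_pos ts a_pos by simp
  have gam_eta: "gam p eta \<le> r" if "p \<in> {1..m}" for p
    using Max_family_le_of_le_inv[of "{1..m}" gam p r eta] P that r gam eta eta_bound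
    unfolding gamma_def r_def th_def a_def by auto
  have au_eta: "au p eta \<le> a" if "p \<in> {1..m}" for p
    using Max_family_le_of_le_inv[of "{1..m}" au p a eta] P au_Kinf that a_pos eta eta_bound
    unfolding alpha_up_def a_def by auto
  have al_eps: "a \<le> al p eps" if "p \<in> {1..m}" for p
    unfolding a_def alpha_lo_def using P that by (intro Min_le) auto
  have kappa_le: "kappa \<le> kap p" if "p \<in> {1..m}" for p
    unfolding kappa_def using P that by (intro Min_le) auto
  show ?thesis
    by (rule deltaGAS_abstraction[where kappa = kappa and th = th and a = a and kap = kap and
          V = V and f = f and al = al and au = au and gam = gam and mu = mu])
      (use N ts eta eps kappa_pos flow lyap kappa_le mu_bound gam gam_eta al_eps au_eta
        a_pos mu th in \<open>auto simp: r_def\<close>)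
qed

end
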